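(* If $D$ is an algebraic curve in $\mathbb{CP}^2$ of degree $d$, then for every $n\ge0$ the pullback $(R^n)^*D$ is a divisor of degree $d\cdot4^n$.
   Context: $R[U:V:W]=[(U^2+V^2)^2:V^2(U+W)^2:(V^2+W^2)^2]$ on $\mathbb{CP}^2$. For a rational map $S$ of $\mathbb{CP}^2$ with reduced homogeneous polynomial lift $\hat S$ (components without common factor) and a curve $D=\{p=0\}$ given by a homogeneous polynomial $p$, the pullback $S^*D$ is the divisor $\{p\circ\hat S=0\}$ counted with multiplicities; here $S=R^n$. *)

theory Defs
  imports Complex_Main "HOL-Library.Poly_Mapping" "HOL-Library.Product_Plus"
begin

text \<open>Polynomials in the three homogeneous coordinates U, V, W of CP^2 with complex
coefficients: finitely supported maps from exponent triples (a,b,c), standing for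
the monomial U^a V^b W^c, to coefficients.\<close>

type_synonym mpoly3 = "(nat \<times> nat \<times> nat) \<Rightarrow>\<^sub>0 complex"

definition const3 :: "complex \<Rightarrow> mpoly3" where
  "const3 c = Poly_Mapping.single (0,0,0) c"

definition varU :: mpoly3 where "varU = Poly_Mapping.single (1,0,0) 1"
definition varV :: mpoly3 where "varV = Poly_Mapping.single (0,1,0) 1"
definition varW :: mpoly3 where "varW = Poly_Mapping.single (0,0,1) 1"

definition homogeneous3 :: "nat \<Rightarrow> mpoly3 \<Rightarrow> bool" where
  "homogeneous3 d p \<longleftrightarrow> (\<forall>(a,b,c) \<in> Poly_Mapping.keys p. a + b + c = d)"

definition subst3 :: "mpoly3 \<Rightarrow> mpoly3 \<times> mpoly3 \<times> mpoly3 \<Rightarrow> mpoly3" where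
  "subst3 p F = (case F of (f,g,h) \<Rightarrow>
     (\<Sum>(a,b,c) \<in> Poly_Mapping.keys p.
        const3 (Poly_Mapping.lookup p (a,b,c)) * f ^ a * g ^ b * h ^ c))"

definition comp3 :: "mpoly3 \<times> mpoly3 \<times> mpoly3 \<Rightarrow> mpoly3 \<times> mpoly3 \<times> mpoly3
                     \<Rightarrow> mpoly3 \<times> mpoly3 \<times> mpoly3" where
  "comp3 S T = (case S of (s0,s1,s2) \<Rightarrow> (subst3 s0 T, subst3 s1 T, subst3 s2 T))"

definition Rhat :: "mpoly3 \<times> mpoly3 \<times> mpoly3" where
  "Rhat = ((varU^2 + varV^2)^2, varV^2 * (varU + varW)^2, (varV^2 + varW^2)^2)"

text \<open>A polynomial lift of R^n obtained by naive composition (possibly non-reduced).\<close>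
primrec Rlift_iter :: "nat \<Rightarrow> mpoly3 \<times> mpoly3 \<times> mpoly3" where
  "Rlift_iter 0 = (varU, varV, varW)"
| "Rlift_iter (Suc n) = comp3 Rhat (Rlift_iter n)"

text \<open>G is a reduced homogeneous polynomial lift of the rational map R^n:
its components are homogeneous of a common degree, not all zero, have no
common non-unit factor, and G defines the same rational map as the naive lift
(the triples are proportional, i.e. all 2x2 cross products agree).\<close>
definition reduced_lift_Rn :: "nat \<Rightarrow> mpoly3 \<times> mpoly3 \<times> mpoly3 \<Rightarrow> bool" where
  "reduced_lift_Rn n G = (case G of (g0,g1,g2) \<Rightarrow> case Rlift_iter n of (f0,f1,f2) \<Rightarrow>
     (\<exists>k. homogeneous3 k g0 \<and> homogeneous3 k g1 \<and> homogeneous3 k g2)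
     \<and> (g0 \<noteq> 0 \<or> g1 \<noteq> 0 \<or> g2 \<noteq> 0)
     \<and> (\<forall>h. h dvd g0 \<and> h dvd g1 \<and> h dvd g2 \<longrightarrow> h dvd 1)
     \<and> g0 * f1 = g1 * f0 \<and> g0 * f2 = g2 * f0 \<and> g1 * f2 = g2 * f1)"

text \<open>The pullback S^*D of D = {p = 0} is the divisor of p o S^ (S^ a reduced lift).
The degree of the divisor of a nonzero homogeneous polynomial q is its degree.\<close>

end

theory Submission
  imports Defs "HOL-Computational_Algebra.Polynomial_Factorial" "HOL-Computational_Algebra.Field_as_Ring"
begin

text \<open>
  The naive lift \<open>F = (a, b, c)\<close> of \<open>R\<^sup>n\<close>, obtained by composing the lift of \<open>R\<close> with
  itself, has components homogeneous of degree \<open>N = 4\<^sup>n\<close>, and setting \<open>V = 0\<close> turns it into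
  \<open>(U\<^sup>N, 0, W\<^sup>N)\<close>. A common factor of \<open>a\<close> and \<open>c\<close> is homogeneous, being a factor of a
  homogeneous polynomial, and becomes a common factor of \<open>U\<^sup>N\<close> and \<open>W\<^sup>N\<close> at \<open>V = 0\<close>;
  hence it is constant and \<open>F\<close> is already reduced. By unique factorisation every reduced lift
  proportional to \<open>F\<close> is a nonzero multiple \<open>z F\<close>, and \<open>p(z F) = z\<^sup>d p(F)\<close> is homogeneous
  of degree \<open>d 4\<^sup>n\<close>. Finally \<open>p(F) \<noteq> 0\<close>: write \<open>p = V\<^sup>B q\<close> with \<open>q(U, 0, W) \<noteq> 0\<close>; then
  \<open>p(F) = b\<^sup>B q(F)\<close>, and at \<open>V = 0\<close> the factor \<open>q(F)\<close> becomes \<open>q(U\<^sup>N, 0, W\<^sup>N) \<noteq> 0\<close>.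
\<close>

subsection \<open>Substitution\<close>

lemma poly_mapping_sum_single:
  "p = (\<Sum>k\<in>Poly_Mapping.keys p. Poly_Mapping.single k (Poly_Mapping.lookup p k))"
  by (rule poly_mapping_eqI) (simp add: lookup_sum lookup_single when_def in_keys_iff sum.delta)

locale monomial_eval =
  fixes coeff_hom :: "'a::comm_semiring_1 \<Rightarrow> 'b::comm_semiring_1"
    and mono_hom :: "'m::comm_monoid_add \<Rightarrow> 'b"
  assumes coeff_hom_0: "coeff_hom 0 = 0" and coeff_hom_1: "coeff_hom 1 = 1"
    and coeff_hom_add: "coeff_hom (x + y) = coeff_hom x + coeff_hom y"
    and coeff_hom_mult: "coeff_hom (x * y) = coeff_hom x * coeff_hom y"
    and mono_hom_0: "mono_hom 0 = 1"
    and mono_hom_add: "mono_hom (k + l) = mono_hom k * mono_hom l"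
begin

definition eval :: "('m \<Rightarrow>\<^sub>0 'a) \<Rightarrow> 'b" where
  "eval p = (\<Sum>k\<in>Poly_Mapping.keys p. coeff_hom (Poly_Mapping.lookup p k) * mono_hom k)"

lemma eval_eq_sum_superset:
  "finite S \<Longrightarrow> Poly_Mapping.keys p \<subseteq> S \<Longrightarrow>
     eval p = (\<Sum>k\<in>S. coeff_hom (Poly_Mapping.lookup p k) * mono_hom k)"
  unfolding eval_def by (rule sum.mono_neutral_left) (auto simp: in_keys_iff coeff_hom_0)

lemma eval_zero [simp]: "eval 0 = 0"
  by (simp add: eval_def)

lemma eval_add: "eval (p + q) = eval p + eval q"
proof -
  let ?S = "Poly_Mapping.keys p \<union> Poly_Mapping.keys q"
  have "eval (p + q) = (\<Sum>k\<in>?S. coeff_hom (Poly_Mapping.lookup (p + q) k) * mono_hom k)"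
    by (rule eval_eq_sum_superset) (auto simp: keys_add)
  also have "\<dots> = (\<Sum>k\<in>?S. coeff_hom (Poly_Mapping.lookup p k) * mono_hom k)
                  + (\<Sum>k\<in>?S. coeff_hom (Poly_Mapping.lookup q k) * mono_hom k)"
    by (simp add: lookup_add coeff_hom_add distrib_right sum.distrib)
  also have "\<dots> = eval p + eval q"
    using eval_eq_sum_superset[of ?S p] eval_eq_sum_superset[of ?S q] by simp
  finally show ?thesis .
qed

lemma eval_sum: "eval (sum f A) = (\<Sum>x\<in>A. eval (f x))"
  by (induction A rule: infinite_finite_induct) (simp_all add: eval_add)

lemma eval_single [simp]: "eval (Poly_Mapping.single k a) = coeff_hom a * mono_hom k"
  by (cases "a = 0") (simp_all add: eval_def coeff_hom_0)

lemma eval_mult: "eval (p * q) = eval p * eval q"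
proof -
  have "p * q = (\<Sum>k\<in>Poly_Mapping.keys p. \<Sum>l\<in>Poly_Mapping.keys q.
       Poly_Mapping.single (k + l) (Poly_Mapping.lookup p k * Poly_Mapping.lookup q l))"
    by (subst (1 2) poly_mapping_sum_single) (simp add: sum_product mult_single)
  then have "eval (p * q) = (\<Sum>k\<in>Poly_Mapping.keys p. \<Sum>l\<in>Poly_Mapping.keys q.
       (coeff_hom (Poly_Mapping.lookup p k) * mono_hom k) * (coeff_hom (Poly_Mapping.lookup q l) * mono_hom l))"
    by (simp add: eval_sum coeff_hom_mult mono_hom_add mult_ac)
  then show ?thesis
    by (simp add: eval_def sum_product)
qed

lemma eval_one [simp]: "eval 1 = 1"
  using eval_single[of 0 1] by (simp add: coeff_hom_1 mono_hom_0)

lemma eval_pow: "eval (p ^ n) = eval p ^ n"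
  by (induction n) (simp_all add: eval_mult)

end

lemma const3_eq_single: "const3 c = Poly_Mapping.single 0 c"
  by (simp add: const3_def zero_prod_def)

lemma const3_0 [simp]: "const3 0 = 0" and const3_1 [simp]: "const3 1 = 1"
  by (simp_all add: const3_eq_single)

lemma const3_add: "const3 (x + y) = const3 x + const3 y"
  by (simp add: const3_eq_single single_add)

lemma const3_mult: "const3 (x * y) = const3 x * const3 y"
  by (simp add: const3_eq_single mult_single)

lemma const3_pow: "const3 (x ^ n) = const3 x ^ n"
  by (induction n) (simp_all add: const3_mult)

lemma const3_eq_0_iff [simp]: "const3 c = 0 \<longleftrightarrow> c = 0"
  by (metis const3_eq_single lookup_single_eq lookup_zero single_zero)

lemma single_pow3:
  "Poly_Mapping.single (a, b, c) (1::complex) ^ n = Poly_Mapping.single (n * a, n * b, n * c) 1"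
  by (induction n) (simp_all add: mult_single flip: single_one zero_prod_def)

lemma varU_pow: "varU ^ n = Poly_Mapping.single (n, 0, 0) 1"
  and varV_pow: "varV ^ n = Poly_Mapping.single (0, n, 0) 1"
  and varW_pow: "varW ^ n = Poly_Mapping.single (0, 0, n) 1"
  by (simp_all add: varU_def varV_def varW_def single_pow3)

lemma varU_pow_ne_zero: "varU ^ n \<noteq> 0"
  and varV_ne_zero: "varV \<noteq> 0"
  by (metis varU_pow varV_def lookup_single_eq lookup_zero one_neq_zero)+

lemma subst3_expand:
  "subst3 p (f, g, h) = (\<Sum>k\<in>Poly_Mapping.keys p.
     const3 (Poly_Mapping.lookup p k) * f ^ fst k * g ^ fst (snd k) * h ^ snd (snd k))"
  by (simp add: subst3_def split_def)

lemma monomial_eval_subst3: "monomial_eval const3 (\<lambda>(a, b, c). f ^ a * g ^ b * h ^ c)"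
  by unfold_locales
    (auto simp: const3_add const3_mult zero_prod_def power_add split: prod.splits)

lemma subst3_eq_eval:
  "subst3 p (f, g, h) = monomial_eval.eval const3 (\<lambda>(a, b, c). f ^ a * g ^ b * h ^ c) p"
  unfolding subst3_def monomial_eval.eval_def[OF monomial_eval_subst3]
  by (auto intro!: sum.cong simp: mult.assoc)

lemma subst3_add: "subst3 (p + q) F = subst3 p F + subst3 q F"
  and subst3_mult: "subst3 (p * q) F = subst3 p F * subst3 q F"
  and subst3_pow: "subst3 (p ^ n) F = subst3 p F ^ n"
  and subst3_sum: "subst3 (sum u A) F = (\<Sum>x\<in>A. subst3 (u x) F)"
  and subst3_zero: "subst3 0 F = 0"
  by (cases F; simp add: subst3_eq_eval monomial_eval.eval_add[OF monomial_eval_subst3]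
      monomial_eval.eval_mult[OF monomial_eval_subst3] monomial_eval.eval_pow[OF monomial_eval_subst3]
      monomial_eval.eval_sum[OF monomial_eval_subst3] monomial_eval.eval_zero[OF monomial_eval_subst3])+

lemma subst3_single:
  "subst3 (Poly_Mapping.single (a, b, c) z) (f, g, h) = const3 z * f ^ a * g ^ b * h ^ c"
  unfolding subst3_eq_eval monomial_eval.eval_single[OF monomial_eval_subst3]
  by (simp add: mult.assoc)

lemma subst3_const3: "subst3 (const3 z) F = const3 z"
  by (cases F) (simp add: const3_def subst3_single)

lemma subst3_varU: "subst3 varU (f, g, h) = f"
  and subst3_varV: "subst3 varV (f, g, h) = g"
  and subst3_varW: "subst3 varW (f, g, h) = h"
  by (simp_all add: varU_def varV_def varW_def subst3_single)

lemma subst3_subst3: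
  "subst3 (subst3 p (f, g, h)) F = subst3 p (subst3 f F, subst3 g F, subst3 h F)"
  by (simp add: subst3_def[of p] subst3_sum subst3_mult subst3_pow subst3_const3 split_def)

subsection \<open>Unique factorisation\<close>

text \<open>
  Nesting the variables as \<open>((\<complex>[U])[W])[V]\<close> identifies \<open>mpoly3\<close> with a ring the library
  knows to be factorial; gcds and units are transported back along this isomorphism.
\<close>

type_synonym cpoly3 = "complex poly poly poly"

definition nested_poly :: "mpoly3 \<Rightarrow> cpoly3" where
  "nested_poly = monomial_eval.eval (\<lambda>z. [:[:[:z:]:]:]) (\<lambda>(a, b, c). monom (monom (monom 1 a) c) b)"

lemma monomial_eval_nested_poly:
  "monomial_eval (\<lambda>z. [:[:[:z:]:]:] :: cpoly3) (\<lambda>(a, b, c). monom (monom (monom 1 a) c) b)"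
  by unfold_locales (auto simp: mult_monom zero_prod_def one_pCons monom_0 split: prod.splits)

lemma nested_poly_add: "nested_poly (p + q) = nested_poly p + nested_poly q"
  and nested_poly_mult: "nested_poly (p * q) = nested_poly p * nested_poly q"
  and nested_poly_pow: "nested_poly (p ^ n) = nested_poly p ^ n"
  and nested_poly_sum: "nested_poly (sum u A) = (\<Sum>x\<in>A. nested_poly (u x))"
  and nested_poly_zero [simp]: "nested_poly 0 = 0"
  and nested_poly_one [simp]: "nested_poly 1 = 1"
  unfolding nested_poly_def
  by (simp_all add: monomial_eval.eval_add[OF monomial_eval_nested_poly]
      monomial_eval.eval_mult[OF monomial_eval_nested_poly]
      monomial_eval.eval_pow[OF monomial_eval_nested_poly]
      monomial_eval.eval_sum[OF monomial_eval_nested_poly]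
      monomial_eval.eval_one[OF monomial_eval_nested_poly]
      monomial_eval.eval_zero[OF monomial_eval_nested_poly])

lemma nested_poly_single:
  "nested_poly (Poly_Mapping.single (a, b, c) z) = monom (monom (monom z a) c) b"
  unfolding nested_poly_def monomial_eval.eval_single[OF monomial_eval_nested_poly]
  by (simp add: smult_monom)

lemma nested_poly_const3: "nested_poly (const3 z) = [:[:[:z:]:]:]"
  by (simp add: const3_def nested_poly_single monom_0)

lemma nested_poly_varU: "nested_poly varU = [:[:[:0, 1:]:]:]"
  and nested_poly_varV: "nested_poly varV = [:0, 1:]"
  and nested_poly_varW: "nested_poly varW = [:[:0, 1:]:]"
  by (simp_all add: varU_def varV_def varW_def nested_poly_single monom_Suc monom_0 one_pCons)

lemma coeff_nested_poly:
  "coeff (coeff (coeff (nested_poly p) b) c) a = Poly_Mapping.lookup p (a, b, c)"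
proof -
  have "coeff (coeff (coeff (nested_poly p) b) c) a =
        (\<Sum>k\<in>Poly_Mapping.keys p. if k = (a, b, c) then Poly_Mapping.lookup p k else 0)"
    by (subst poly_mapping_sum_single)
      (auto simp: nested_poly_sum nested_poly_single coeff_sum coeff_monom prod_eq_iff
        intro!: sum.cong)
  then show ?thesis
    by (simp add: sum.delta in_keys_iff)
qed

lemma nested_poly_inject: "nested_poly p = nested_poly q \<longleftrightarrow> p = q"
  by (metis coeff_nested_poly poly_mapping_eqI prod_cases3)

lemma nested_poly_eq_0_iff [simp]: "nested_poly p = 0 \<longleftrightarrow> p = 0"
  using nested_poly_inject[of p 0] by simp

lemma poly_subring_eq_UNIV:
  fixes S :: "'a::comm_ring_1 poly set"
  assumes "\<And>c. [:c:] \<in> S" and "[:0, 1:] \<in> S"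
    and "\<And>x y. x \<in> S \<Longrightarrow> y \<in> S \<Longrightarrow> x + y \<in> S"
    and "\<And>x y. x \<in> S \<Longrightarrow> y \<in> S \<Longrightarrow> x * y \<in> S"
  shows "P \<in> S"
proof (induction P)
  case (pCons c P)
  have "pCons c P = [:c:] + [:0, 1:] * P"
    by simp
  then show ?case
    using assms pCons by metis
qed (use assms(1)[of 0] in simp)

lemma surj_nested_poly: "surj nested_poly"
proof -
  have add: "x + y \<in> range nested_poly" and mult: "x * y \<in> range nested_poly"
    if "x \<in> range nested_poly" "y \<in> range nested_poly" for x y
    using that by (auto simp flip: nested_poly_add nested_poly_mult)
  have const_add: "[:x + y:] = [:x:] + [:y:]" and const_mult: "[:x * y:] = [:x:] * [:y:]"
    for x y :: "'a::comm_ring_1 poly"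
    by simp_all
  have inner: "[:[:q:]:] \<in> range nested_poly" for q
  proof (rule poly_subring_eq_UNIV[where S = "{q. [:[:q:]:] \<in> range nested_poly}", simplified])
    show "[:[:[:c:]:]:] \<in> range nested_poly" for c
      by (metis nested_poly_const3 rangeI)
    show "[:[:[:0, 1:]:]:] \<in> range nested_poly"
      by (metis nested_poly_varU rangeI)
  qed (simp_all only: const_add const_mult add mult)
  have middle: "[:r:] \<in> range nested_poly" for r
  proof (rule poly_subring_eq_UNIV[where S = "{r. [:r:] \<in> range nested_poly}", simplified])
    show "[:[:0, 1:]:] \<in> range nested_poly"
      by (metis nested_poly_varW rangeI)
  qed (simp_all only: inner const_add const_mult add mult)
  have "P \<in> range nested_poly" for P
  proof (rule poly_subring_eq_UNIV)
    show "[:0, 1:] \<in> range nested_poly"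
      by (metis nested_poly_varV rangeI)
  qed (simp_all only: middle add mult)
  then show ?thesis
    by blast
qed

lemma mpoly3_mult_eq_0_iff: "p * q = 0 \<longleftrightarrow> p = 0 \<or> (q::mpoly3) = 0"
  by (simp flip: nested_poly_eq_0_iff add: nested_poly_mult)

lemma mpoly3_mult_left_cancel:
  assumes "(a::mpoly3) \<noteq> 0" "a * b = a * c"
  shows "b = c"
proof -
  have "nested_poly a * nested_poly b = nested_poly a * nested_poly c"
    using assms(2) by (simp flip: nested_poly_mult)
  with assms(1) show ?thesis
    by (simp add: nested_poly_inject)
qed

lemma mpoly3_pow_ne_zero: "(f::mpoly3) \<noteq> 0 \<Longrightarrow> f ^ n \<noteq> 0"
  by (simp flip: nested_poly_eq_0_iff add: nested_poly_pow)

lemma nested_poly_dvd_iff: "nested_poly p dvd nested_poly q \<longleftrightarrow> p dvd q"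
proof
  assume "nested_poly p dvd nested_poly q"
  then obtain R where "nested_poly q = nested_poly p * R"
    by (rule dvdE)
  moreover obtain r where "R = nested_poly r"
    using surj_nested_poly by (metis surjD)
  ultimately have "q = p * r"
    by (simp flip: nested_poly_mult add: nested_poly_inject)
  then show "p dvd q" ..
next
  assume "p dvd q"
  then obtain r where "q = p * r" ..
  then show "nested_poly p dvd nested_poly q"
    by (simp add: nested_poly_mult)
qed

lemma mpoly3_is_unit_iff: "(p::mpoly3) dvd 1 \<longleftrightarrow> (\<exists>z. z \<noteq> 0 \<and> p = const3 z)"
proof -
  have "p dvd 1 \<longleftrightarrow> nested_poly p dvd 1"
    using nested_poly_dvd_iff[of p 1] by simp
  also have "\<dots> \<longleftrightarrow> (\<exists>z. z \<noteq> 0 \<and> nested_poly p = nested_poly (const3 z))"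
    by (auto simp: is_unit_poly_iff dvd_field_iff nested_poly_const3)
  finally show ?thesis
    by (simp add: nested_poly_inject)
qed

subsection \<open>Homogeneity\<close>

definition tdeg3 :: "nat \<times> nat \<times> nat \<Rightarrow> nat" where
  "tdeg3 k = fst k + fst (snd k) + snd (snd k)"

lemma tdeg3_add: "tdeg3 (k + l) = tdeg3 k + tdeg3 l"
  by (cases k; cases l) (simp add: tdeg3_def)

lemma homogeneous3_iff: "homogeneous3 d p \<longleftrightarrow> (\<forall>k\<in>Poly_Mapping.keys p. tdeg3 k = d)"
  by (auto simp: homogeneous3_def tdeg3_def)

lemma homogeneous3_zero: "homogeneous3 d 0"
  by (simp add: homogeneous3_iff)

lemma homogeneous3_add: "homogeneous3 d p \<Longrightarrow> homogeneous3 d q \<Longrightarrow> homogeneous3 d (p + q)"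
  using keys_add[of p q] by (auto simp: homogeneous3_iff)

lemma homogeneous3_mult:
  assumes "homogeneous3 d p" "homogeneous3 e q"
  shows "homogeneous3 (d + e) (p * q)"
  unfolding homogeneous3_iff
proof
  fix k assume "k \<in> Poly_Mapping.keys (p * q)"
  then obtain a b where "k = a + b" "a \<in> Poly_Mapping.keys p" "b \<in> Poly_Mapping.keys q"
    using keys_mult[of p q] by blast
  with assms show "tdeg3 k = d + e"
    by (simp add: homogeneous3_iff tdeg3_add)
qed

lemma homogeneous3_pow: "homogeneous3 d p \<Longrightarrow> homogeneous3 (n * d) (p ^ n)"
proof (induction n)
  case 0
  then show ?case
    by (simp add: homogeneous3_iff tdeg3_def zero_prod_def flip: single_one)
qed (simp add: homogeneous3_mult)

lemma homogeneous3_const3: "homogeneous3 0 (const3 z)"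
  by (simp add: homogeneous3_iff const3_def tdeg3_def)

lemma homogeneous3_sum:
  "(\<And>x. x \<in> A \<Longrightarrow> homogeneous3 d (u x)) \<Longrightarrow> homogeneous3 d (sum u A)"
  by (induction A rule: infinite_finite_induct) (simp_all add: homogeneous3_zero homogeneous3_add)

lemma homogeneous3_varU: "homogeneous3 1 varU"
  and homogeneous3_varV: "homogeneous3 1 varV"
  and homogeneous3_varW: "homogeneous3 1 varW"
  by (simp_all add: homogeneous3_iff varU_def varV_def varW_def tdeg3_def)

lemma homogeneous3_subst3:
  assumes p: "homogeneous3 d p"
    and "homogeneous3 k f" "homogeneous3 k g" "homogeneous3 k h"
  shows "homogeneous3 (d * k) (subst3 p (f, g, h))"
  unfolding subst3_expand
proof (rule homogeneous3_sum)
  fix x assume "x \<in> Poly_Mapping.keys p"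
  then have "d * k = 0 + fst x * k + fst (snd x) * k + snd (snd x) * k"
    using p by (auto simp: homogeneous3_iff tdeg3_def algebra_simps)
  moreover have "homogeneous3 (0 + fst x * k + fst (snd x) * k + snd (snd x) * k)
     (const3 (Poly_Mapping.lookup p x) * f ^ fst x * g ^ fst (snd x) * h ^ snd (snd x))"
    by (intro homogeneous3_mult homogeneous3_const3 homogeneous3_pow assms)
  ultimately show "homogeneous3 (d * k)
     (const3 (Poly_Mapping.lookup p x) * f ^ fst x * g ^ fst (snd x) * h ^ snd (snd x))"
    by simp
qed

lemma subst3_scale:
  assumes "homogeneous3 d p"
  shows "subst3 p (const3 z * f, const3 z * g, const3 z * h) = const3 (z ^ d) * subst3 p (f, g, h)"
  unfolding subst3_expand sum_distrib_left
proof (rule sum.cong[OF refl])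
  fix x assume "x \<in> Poly_Mapping.keys p"
  then have "const3 (z ^ d) = const3 z ^ fst x * const3 z ^ fst (snd x) * const3 z ^ snd (snd x)"
    using assms by (simp add: homogeneous3_iff tdeg3_def const3_pow flip: power_add)
  then show "const3 (Poly_Mapping.lookup p x) * (const3 z * f) ^ fst x * (const3 z * g) ^ fst (snd x)
        * (const3 z * h) ^ snd (snd x) = const3 (z ^ d) * (const3 (Poly_Mapping.lookup p x)
        * f ^ fst x * g ^ fst (snd x) * h ^ snd (snd x))"
    by (simp add: power_mult_distrib mult_ac)
qed

text \<open>
  An extra outermost variable records the total degree, so a homogeneous polynomial becomes a
  monomial in it, and a factor of a monomial is again a monomial.
\<close>

type_synonym cpoly4 = "complex poly poly poly poly"

definition graded_poly :: "mpoly3 \<Rightarrow> cpoly4" where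
  "graded_poly = monomial_eval.eval (\<lambda>z. [:[:[:[:z:]:]:]:])
     (\<lambda>(a, b, c). monom (monom (monom (monom 1 a) c) b) (a + b + c))"

lemma monomial_eval_graded_poly:
  "monomial_eval (\<lambda>z. [:[:[:[:z:]:]:]:] :: cpoly4)
     (\<lambda>(a, b, c). monom (monom (monom (monom 1 a) c) b) (a + b + c))"
  by unfold_locales (auto simp: mult_monom zero_prod_def one_pCons monom_0 ac_simps split: prod.splits)

lemma graded_poly_mult: "graded_poly (p * q) = graded_poly p * graded_poly q"
  unfolding graded_poly_def by (rule monomial_eval.eval_mult[OF monomial_eval_graded_poly])

lemma coeff_graded_poly:
  "coeff (coeff (coeff (coeff (graded_poly p) j) b) c) a =
     (if a + b + c = j then Poly_Mapping.lookup p (a, b, c) else 0)"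
proof -
  have "coeff (coeff (coeff (coeff (graded_poly p) j) b) c) a =
    (\<Sum>k\<in>Poly_Mapping.keys p. if k = (a, b, c) \<and> a + b + c = j then Poly_Mapping.lookup p k else 0)"
    unfolding graded_poly_def monomial_eval.eval_def[OF monomial_eval_graded_poly] coeff_sum
    by (rule sum.cong) (auto simp: smult_monom coeff_monom prod_eq_iff split: prod.splits)
  then show ?thesis
    by (simp add: sum.delta in_keys_iff)
qed

lemma coeff_graded_poly_tdeg3_ne_zero:
  assumes "k \<in> Poly_Mapping.keys p"
  shows "coeff (graded_poly p) (tdeg3 k) \<noteq> 0"
proof
  obtain a b c where k: "k = (a, b, c)"
    by (cases k)
  assume "coeff (graded_poly p) (tdeg3 k) = 0"
  then have "coeff (coeff (coeff (coeff (graded_poly p) (a + b + c)) b) c) a = 0"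
    by (simp add: k tdeg3_def)
  with assms show False
    by (simp add: k coeff_graded_poly in_keys_iff)
qed

lemma graded_poly_homogeneous_eq_monom:
  assumes "homogeneous3 d f" "f \<noteq> 0"
  shows "\<exists>X. X \<noteq> 0 \<and> graded_poly f = monom X d"
proof -
  have other: "coeff (graded_poly f) j = 0" if "j \<noteq> d" for j
  proof -
    have "coeff (coeff (coeff (coeff (graded_poly f) j) b) c) a = 0" for a b c
      using assms(1) that by (force simp: coeff_graded_poly homogeneous3_def in_keys_iff)
    then show ?thesis
      by (simp add: poly_eq_iff)
  qed
  obtain k where k: "k \<in> Poly_Mapping.keys f"
    using assms(2) by (metis all_not_in_conv keys_eq_empty)
  then have "coeff (graded_poly f) d \<noteq> 0"
    using assms(1) coeff_graded_poly_tdeg3_ne_zero[OF k] by (simp add: homogeneous3_iff)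
  moreover have "graded_poly f = monom (coeff (graded_poly f) d) d"
    by (rule poly_eqI) (auto simp: coeff_monom other)
  ultimately show ?thesis
    by blast
qed

lemma mult_eq_monom_imp_monom:
  fixes P Q :: "'a::idom poly"
  assumes PQ: "P * Q = monom X d" and "X \<noteq> 0"
  shows "P = monom (lead_coeff P) (degree P)"
proof -
  have "P \<noteq> 0" "Q \<noteq> 0"
    using assms by auto
  have "order 0 (monom X d) = d"
    using \<open>X \<noteq> 0\<close> order_power_n_n[of 0 d] by (simp add: monom_altdef order_smult)
  then have "order 0 P + order 0 Q = degree P + degree Q"
    using order_mult[of P Q 0] degree_mult_eq[OF \<open>P \<noteq> 0\<close> \<open>Q \<noteq> 0\<close>] PQ \<open>X \<noteq> 0\<close>
    by (simp add: degree_monom_eq)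
  moreover have "order 0 P \<le> degree P" "order 0 Q \<le> degree Q"
    using \<open>P \<noteq> 0\<close> \<open>Q \<noteq> 0\<close> order_degree by auto
  ultimately have "order 0 P = degree P"
    by linarith
  then obtain R where R: "P = [:0, 1:] ^ degree P * R"
    using order_1[of 0 P] by (auto elim: dvdE)
  moreover have "R \<noteq> 0"
    using R \<open>P \<noteq> 0\<close> by auto
  ultimately have "degree P = degree P + degree R"
    by (metis degree_linear_power degree_mult_eq pCons_eq_0_iff power_not_zero zero_neq_one)
  then have "R = [:coeff R 0:]"
    by (simp add: degree_0_id)
  then have "P = [:coeff R 0:] * [:0, 1:] ^ degree P"
    using R by (simp only: mult.commute)
  then have "P = monom (coeff R 0) (degree P)"
    by (simp add: monom_altdef)
  then show ?thesis
    by (metis lead_coeff_monom)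
qed

lemma homogeneous3_factor:
  assumes "h * k = f" "f \<noteq> 0" "homogeneous3 d f"
  shows "\<exists>e. homogeneous3 e h"
proof -
  obtain X where "X \<noteq> 0" "graded_poly h * graded_poly k = monom X d"
    using graded_poly_homogeneous_eq_monom[OF assms(3,2)] assms(1) by (auto simp flip: graded_poly_mult)
  then have "graded_poly h = monom (lead_coeff (graded_poly h)) (degree (graded_poly h))"
    using mult_eq_monom_imp_monom by blast
  then have "homogeneous3 (degree (graded_poly h)) h"
    using coeff_graded_poly_tdeg3_ne_zero[of _ h] unfolding homogeneous3_iff
    by (metis (full_types) coeff_monom)
  then show ?thesis ..
qed

lemma homogeneous3_0_imp_const3:
  "homogeneous3 0 h \<Longrightarrow> h = const3 (Poly_Mapping.lookup h (0, 0, 0))"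
proof (rule poly_mapping_eqI)
  fix k :: "nat \<times> nat \<times> nat"
  assume "homogeneous3 0 h"
  then have "k \<noteq> (0, 0, 0) \<Longrightarrow> k \<notin> Poly_Mapping.keys h"
    by (cases k) (auto simp: homogeneous3_def)
  then show "Poly_Mapping.lookup h k = Poly_Mapping.lookup (const3 (Poly_Mapping.lookup h (0, 0, 0))) k"
    by (cases "k = (0, 0, 0)") (auto simp: const3_def in_keys_iff lookup_single)
qed

subsection \<open>The naive lift of \<open>R\<^sup>n\<close>\<close>

definition at_V0 :: "mpoly3 \<Rightarrow> mpoly3" where
  "at_V0 f = subst3 f (varU, 0, varW)"

lemma at_V0_add: "at_V0 (p + q) = at_V0 p + at_V0 q"
  and at_V0_mult: "at_V0 (p * q) = at_V0 p * at_V0 q"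
  and at_V0_pow: "at_V0 (p ^ n) = at_V0 p ^ n"
  and at_V0_zero: "at_V0 0 = 0"
  by (simp_all add: at_V0_def subst3_add subst3_mult subst3_pow subst3_zero)

lemma Rlift_iter_Suc_eq:
  assumes "Rlift_iter n = (a, b, c)" and "Rlift_iter (Suc n) = (a', b', c')"
  shows "a' = (a\<^sup>2 + b\<^sup>2)\<^sup>2 \<and> b' = b\<^sup>2 * (a + c)\<^sup>2 \<and> c' = (b\<^sup>2 + c\<^sup>2)\<^sup>2"
  using assms by (simp add: comp3_def Rhat_def subst3_add subst3_mult subst3_pow subst3_varU subst3_varV subst3_varW)

lemma Rlift_iter_homogeneous:
  assumes "Rlift_iter n = (a, b, c)"
  shows "homogeneous3 (4 ^ n) a \<and> homogeneous3 (4 ^ n) b \<and> homogeneous3 (4 ^ n) c"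
  using assms
proof (induction n arbitrary: a b c)
  case 0
  then show ?case
    using homogeneous3_varU homogeneous3_varV homogeneous3_varW by simp
next
  case (Suc n)
  obtain a' b' c' where F: "Rlift_iter n = (a', b', c')"
    by (cases "Rlift_iter n")
  let ?N = "4 ^ n :: nat"
  have "homogeneous3 ?N a'" "homogeneous3 ?N b'" "homogeneous3 ?N c'"
    using Suc.IH[OF F] by auto
  moreover have "(4::nat) ^ Suc n = 2 * (2 * ?N)" "(4::nat) ^ Suc n = 2 * ?N + 2 * ?N"
    by simp_all
  ultimately show ?case
    using Rlift_iter_Suc_eq[OF F Suc.prems]
    by (metis homogeneous3_add homogeneous3_mult homogeneous3_pow)
qed

lemma Rlift_iter_at_V0:
  assumes "Rlift_iter n = (a, b, c)"
  shows "at_V0 a = varU ^ 4 ^ n \<and> at_V0 b = 0 \<and> at_V0 c = varW ^ 4 ^ n"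
  using assms
proof (induction n arbitrary: a b c)
  case 0
  then show ?case
    by (simp add: at_V0_def subst3_varU subst3_varV subst3_varW)
next
  case (Suc n)
  obtain a' b' c' where F: "Rlift_iter n = (a', b', c')"
    by (cases "Rlift_iter n")
  with Suc show ?case
    using Rlift_iter_Suc_eq[OF F Suc.prems]
    by (simp add: at_V0_add at_V0_mult at_V0_pow flip: power_mult)
qed

lemma Rlift_iter_fst_ne_zero: "Rlift_iter n = (a, b, c) \<Longrightarrow> a \<noteq> 0"
  using Rlift_iter_at_V0 varU_pow_ne_zero by (fastforce simp: at_V0_zero)

lemma Rlift_iter_snd_ne_zero:
  assumes "Rlift_iter n = (a, b, c)"
  shows "b \<noteq> 0"
  using assms
proof (induction n arbitrary: a b c)
  case 0
  then show ?case
    using varV_ne_zero by simp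
next
  case (Suc n)
  obtain a' b' c' where F: "Rlift_iter n = (a', b', c')"
    by (cases "Rlift_iter n")
  let ?N = "4 ^ n :: nat"
  have "Poly_Mapping.lookup (at_V0 (a' + c')) (?N, 0, 0) = 1"
    using Rlift_iter_at_V0[OF F] by (simp add: at_V0_add varU_pow varW_pow lookup_add lookup_single)
  then have "a' + c' \<noteq> 0"
    by (auto simp: at_V0_zero)
  with Suc.IH[OF F] show ?case
    using Rlift_iter_Suc_eq[OF F Suc.prems] by (simp add: mpoly3_mult_eq_0_iff mpoly3_pow_ne_zero)
qed

lemma dvd_varU_pow_varW_pow_imp_unit:
  assumes "x dvd varU ^ N" "x dvd varW ^ N"
  shows "x dvd 1"
proof -
  have dU: "nested_poly x dvd [:[:[:0, 1:] ^ N:]:]"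
    using assms(1) by (simp flip: nested_poly_dvd_iff add: nested_poly_pow nested_poly_varU poly_const_pow)
  have dW: "nested_poly x dvd [:[:0, 1:] ^ N:]"
    using assms(2) by (simp flip: nested_poly_dvd_iff add: nested_poly_pow nested_poly_varW poly_const_pow)
  have "degree (nested_poly x) = 0"
    using dvd_imp_degree_le[OF dU] by simp
  then obtain q where q: "nested_poly x = [:q:]"
    by (metis degree_0_id)
  have "degree q = 0"
    using dvd_imp_degree_le[OF dU[unfolded q const_poly_dvd_const_poly_iff]] by simp
  then obtain r where r: "q = [:r:]"
    by (metis degree_0_id)
  have "[:r:] dvd [:0, 1:] ^ N"
    using dW unfolding q r const_poly_dvd_const_poly_iff .
  then have "r dvd coeff ([:0, 1:] ^ N) N"
    using const_poly_dvd_iff by blast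
  then have "is_unit r"
    using coeff_linear_power[of "0::complex poly" N] by simp
  then have "is_unit (nested_poly x)"
    by (simp add: q r is_unit_poly_iff)
  then show ?thesis
    using nested_poly_dvd_iff[of x 1] by simp
qed

lemma Rlift_iter_coprime:
  assumes F: "Rlift_iter n = (a, b, c)" and "h dvd a" "h dvd c"
  shows "h dvd 1"
proof -
  have a: "at_V0 a = varU ^ 4 ^ n" and c: "at_V0 c = varW ^ 4 ^ n"
    using Rlift_iter_at_V0[OF F] by simp_all
  have "a \<noteq> 0"
    using Rlift_iter_fst_ne_zero[OF F] .
  obtain k where "a = h * k"
    using \<open>h dvd a\<close> ..
  then obtain e where h: "homogeneous3 e h"
    using homogeneous3_factor \<open>a \<noteq> 0\<close> Rlift_iter_homogeneous[OF F] by metis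
  have "at_V0 h dvd varU ^ 4 ^ n" "at_V0 h dvd varW ^ 4 ^ n"
    using assms(2,3) a c by (metis at_V0_mult dvd_def)+
  then obtain z where z: "z \<noteq> 0" "at_V0 h = const3 z"
    using dvd_varU_pow_varW_pow_imp_unit mpoly3_is_unit_iff by blast
  have "homogeneous3 (e * 1) (at_V0 h)"
    unfolding at_V0_def by (intro homogeneous3_subst3 h homogeneous3_varU homogeneous3_varW homogeneous3_zero)
  with z have "e = 0"
    by (simp add: homogeneous3_def const3_def)
  then have "h = const3 (Poly_Mapping.lookup h (0, 0, 0))"
    using h homogeneous3_0_imp_const3 by blast
  moreover have "h \<noteq> 0"
    using \<open>a = h * k\<close> \<open>a \<noteq> 0\<close> by auto
  ultimately show "h dvd 1"
    using mpoly3_is_unit_iff by (metis const3_0)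
qed

subsection \<open>Reduced lifts\<close>

lemma associated_if_proportional_coprime:
  fixes a b c g0 g1 g2 :: "'a::semiring_gcd"
  assumes "is_unit (gcd a (gcd b c))" "is_unit (gcd g0 (gcd g1 g2))"
    and "g0 * b = g1 * a" "g0 * c = g2 * a"
  shows "normalize a = normalize g0"
proof -
  have "normalize a = normalize (a * gcd g0 (gcd g1 g2))"
    using assms(2) by simp
  also have "\<dots> = gcd (a * g0) (gcd (a * g1) (a * g2))"
    by (simp add: gcd_mult_left)
  also have "\<dots> = gcd (g0 * a) (gcd (g0 * b) (g0 * c))"
    using assms(3,4) by (simp add: mult.commute)
  also have "\<dots> = normalize (g0 * gcd a (gcd b c))"
    by (simp add: gcd_mult_left)
  also have "\<dots> = normalize g0"
    using assms(1) by simp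
  finally show ?thesis .
qed

lemma is_unit_gcd_nested_poly:
  assumes "\<forall>h. h dvd a \<and> h dvd b \<and> h dvd c \<longrightarrow> h dvd 1"
  shows "is_unit (gcd (nested_poly a) (gcd (nested_poly b) (nested_poly c)))"
proof -
  obtain h where h: "nested_poly h = gcd (nested_poly a) (gcd (nested_poly b) (nested_poly c))"
    using surj_nested_poly by (metis surjD)
  then have "h dvd a" "h dvd b" "h dvd c"
    by (metis dvd_trans gcd_dvd1 gcd_dvd2 nested_poly_dvd_iff)+
  with assms h show ?thesis
    by (metis nested_poly_dvd_iff nested_poly_one)
qed

lemma proportional_coprime_triples_eq_scaled:
  assumes "\<forall>h. h dvd a \<and> h dvd b \<and> h dvd c \<longrightarrow> h dvd 1"
    and "\<forall>h. h dvd g0 \<and> h dvd g1 \<and> h dvd g2 \<longrightarrow> h dvd 1"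
    and "a \<noteq> 0" "g0 * b = g1 * a" "g0 * c = g2 * a"
  shows "\<exists>z. z \<noteq> 0 \<and> g0 = const3 z * a \<and> g1 = const3 z * b \<and> g2 = const3 z * c"
proof -
  have "normalize (nested_poly a) = normalize (nested_poly g0)"
  proof (rule associated_if_proportional_coprime)
    show "nested_poly g0 * nested_poly b = nested_poly g1 * nested_poly a"
      "nested_poly g0 * nested_poly c = nested_poly g2 * nested_poly a"
      using assms(4,5) by (simp_all flip: nested_poly_mult)
  qed (use is_unit_gcd_nested_poly[OF assms(1)] is_unit_gcd_nested_poly[OF assms(2)] in blast)+
  then obtain u where "is_unit u" "nested_poly g0 = u * nested_poly a"
    by (elim associatedE2)
  then obtain z where z: "z \<noteq> 0" "nested_poly g0 = nested_poly (const3 z * a)"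
    by (auto simp: is_unit_poly_iff dvd_field_iff nested_poly_mult nested_poly_const3)
  then have g0: "g0 = const3 z * a"
    by (simp add: nested_poly_inject)
  have "a * g1 = a * (const3 z * b)" "a * g2 = a * (const3 z * c)"
    using assms(4,5) unfolding g0 by (simp_all add: ac_simps)
  then show ?thesis
    using z(1) g0 mpoly3_mult_left_cancel[OF \<open>a \<noteq> 0\<close>] by blast
qed

lemma reduced_lift_Rn_Rlift_iter: "reduced_lift_Rn n (Rlift_iter n)"
proof -
  obtain a b c where F: "Rlift_iter n = (a, b, c)"
    by (cases "Rlift_iter n")
  with Rlift_iter_fst_ne_zero[OF F] Rlift_iter_homogeneous[OF F] Rlift_iter_coprime[OF F] show ?thesis
    by (auto simp: reduced_lift_Rn_def F mult.commute)
qed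

lemma reduced_lift_Rn_eq_scaled:
  assumes "reduced_lift_Rn n G" and F: "Rlift_iter n = (a, b, c)"
  shows "\<exists>z. z \<noteq> 0 \<and> G = (const3 z * a, const3 z * b, const3 z * c)"
proof -
  obtain g0 g1 g2 where G: "G = (g0, g1, g2)"
    by (cases G)
  have "\<forall>h. h dvd a \<and> h dvd b \<and> h dvd c \<longrightarrow> h dvd 1"
    using reduced_lift_Rn_Rlift_iter[of n] by (simp add: reduced_lift_Rn_def F)
  with assms(1) Rlift_iter_fst_ne_zero[OF F] show ?thesis
    using proportional_coprime_triples_eq_scaled[of a b c g0 g1 g2]
    by (auto simp: reduced_lift_Rn_def F G)
qed

subsection \<open>Nonvanishing of the pullback\<close>

lemma subst3_pow_vars:
  "subst3 r (varU ^ i, varV ^ j, varW ^ k) = (\<Sum>m\<in>Poly_Mapping.keys r.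
     Poly_Mapping.single (i * fst m, j * fst (snd m), k * snd (snd m)) (Poly_Mapping.lookup r m))"
  by (simp add: subst3_expand varU_pow varV_pow varW_pow single_pow3 const3_def mult_single mult.commute)

lemma subst3_pow_vars_ne_zero:
  assumes "r \<noteq> 0" "0 < i" "0 < j" "0 < k"
  shows "subst3 r (varU ^ i, varV ^ j, varW ^ k) \<noteq> 0"
proof
  obtain m0 where m0: "m0 \<in> Poly_Mapping.keys r"
    using assms(1) by (metis all_not_in_conv keys_eq_empty)
  let ?scale = "\<lambda>m::nat \<times> nat \<times> nat. (i * fst m, j * fst (snd m), k * snd (snd m))"
  have "?scale m \<noteq> ?scale m0" if "m \<noteq> m0" for m
    using that assms(2-4) by (auto simp: prod_eq_iff)
  then have "Poly_Mapping.lookup (subst3 r (varU ^ i, varV ^ j, varW ^ k)) (?scale m0) =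
             (\<Sum>m\<in>Poly_Mapping.keys r. if m = m0 then Poly_Mapping.lookup r m else 0)"
    unfolding subst3_pow_vars lookup_sum
    by (intro sum.cong refl) (simp add: lookup_single_not_eq)
  also have "\<dots> \<noteq> 0"
    using m0 by (simp add: in_keys_iff)
  finally show "subst3 r (varU ^ i, varV ^ j, varW ^ k) = 0 \<Longrightarrow> False"
    by simp
qed

lemma at_V0_single:
  "at_V0 (Poly_Mapping.single (a, b, c) z) = (if b = 0 then Poly_Mapping.single (a, 0, c) z else 0)"
  by (simp add: at_V0_def subst3_single varU_pow varW_pow const3_def mult_single power_0_left)

lemma nested_poly_at_V0: "nested_poly (at_V0 f) = [:coeff (nested_poly f) 0:]"
proof -
  have single: "nested_poly (at_V0 (Poly_Mapping.single k z)) =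
                [:coeff (nested_poly (Poly_Mapping.single k z)) 0:]" for k z
    by (cases k) (simp add: at_V0_single nested_poly_single coeff_monom monom_0)
  have "nested_poly (at_V0 f) =
        (\<Sum>k\<in>Poly_Mapping.keys f. nested_poly (at_V0 (Poly_Mapping.single k (Poly_Mapping.lookup f k))))"
    by (subst poly_mapping_sum_single[of f]) (simp add: at_V0_def subst3_sum nested_poly_sum)
  also have "\<dots> = [:coeff (nested_poly f) 0:]"
    by (subst (2) poly_mapping_sum_single[of f]) (simp add: single nested_poly_sum coeff_sum sum_to_poly)
  finally show ?thesis .
qed

lemma mpoly3_factor_varV_pow:
  assumes "p \<noteq> 0"
  obtains B q where "p = varV ^ B * q" "at_V0 q \<noteq> 0"
proof -
  obtain Q where Q: "nested_poly p = [:0, 1:] ^ order 0 (nested_poly p) * Q" "\<not> [:0, 1:] dvd Q"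
    using order_decomp[of "nested_poly p" 0] assms by auto
  obtain q where q: "Q = nested_poly q"
    using surj_nested_poly by (metis surjD)
  have "p = varV ^ order 0 (nested_poly p) * q"
    using Q(1) by (simp add: q nested_poly_mult nested_poly_pow nested_poly_varV flip: nested_poly_inject)
  moreover have "at_V0 q \<noteq> 0"
    using Q(2) dvd_iff_poly_eq_0[of 0 Q]
    by (simp add: q poly_0_coeff_0 flip: nested_poly_eq_0_iff add: nested_poly_at_V0)
  ultimately show thesis
    by (rule that)
qed

lemma subst3_ne_zero_if_at_V0:
  assumes "p \<noteq> 0" "0 < N" "f1 \<noteq> 0"
    and "at_V0 f0 = varU ^ N" "at_V0 f1 = 0" "at_V0 f2 = varW ^ N"
  shows "subst3 p (f0, f1, f2) \<noteq> 0"
proof -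
  obtain B q where p: "p = varV ^ B * q" and q: "at_V0 q \<noteq> 0"
    using mpoly3_factor_varV_pow[OF assms(1)] .
  have "at_V0 (subst3 q (f0, f1, f2)) = subst3 q (varU ^ N, 0, varW ^ N)"
    using assms(4-6) by (simp add: at_V0_def subst3_subst3)
  also have "\<dots> = subst3 (at_V0 q) (varU ^ N, varV ^ 1, varW ^ N)"
    by (simp add: at_V0_def subst3_subst3 subst3_varU subst3_varW subst3_zero)
  also have "\<dots> \<noteq> 0"
    using subst3_pow_vars_ne_zero[OF q, of N 1 N] assms(2) by simp
  finally have "subst3 q (f0, f1, f2) \<noteq> 0"
    by (auto simp: at_V0_zero)
  then show ?thesis
    using assms(3) by (simp add: p subst3_mult subst3_pow subst3_varV mpoly3_mult_eq_0_iff mpoly3_pow_ne_zero)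
qed

theorem corollary4p5:
  fixes p :: mpoly3 and d n :: nat
  assumes "p \<noteq> 0" and "0 < d" and "homogeneous3 d p"
  shows "(\<exists>G. reduced_lift_Rn n G)
       \<and> (\<forall>G. reduced_lift_Rn n G \<longrightarrow>
              subst3 p G \<noteq> 0 \<and> homogeneous3 (d * 4 ^ n) (subst3 p G))"
proof -
  obtain a b c where F: "Rlift_iter n = (a, b, c)"
    by (cases "Rlift_iter n")
  have nonzero: "subst3 p (a, b, c) \<noteq> 0"
    using Rlift_iter_at_V0[OF F] Rlift_iter_snd_ne_zero[OF F]
    by (intro subst3_ne_zero_if_at_V0 assms(1)) auto
  have homogeneous: "homogeneous3 (d * 4 ^ n) (subst3 p (a, b, c))"
    using Rlift_iter_homogeneous[OF F] by (intro homogeneous3_subst3 assms(3)) auto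
  have "subst3 p G \<noteq> 0 \<and> homogeneous3 (d * 4 ^ n) (subst3 p G)" if G: "reduced_lift_Rn n G" for G
  proof -
    obtain z where "z \<noteq> 0" and "G = (const3 z * a, const3 z * b, const3 z * c)"
      using reduced_lift_Rn_eq_scaled[OF G F] by blast
    then have scaled: "subst3 p G = const3 (z ^ d) * subst3 p (a, b, c)"
      using subst3_scale[OF assms(3)] by simp
    have "homogeneous3 (0 + d * 4 ^ n) (const3 (z ^ d) * subst3 p (a, b, c))"
      by (intro homogeneous3_mult homogeneous3_const3 homogeneous)
    with scaled nonzero \<open>z \<noteq> 0\<close> show ?thesis
      by (simp add: mpoly3_mult_eq_0_iff)
  qed
  then show ?thesis
    using reduced_lift_Rn_Rlift_iter by blast
qed

end
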